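(* Let $(\eta_k)_{k\in\mathbb{N}}$ be independent random variables with values in $\mathbb{N}$, $P(\eta_k=i)=p_{ik}$ with $p_{ik}\ge0$ and $\sum_{i=1}^\infty p_{ik}=1$ for all $k$, and suppose there exists $i_0\in\mathbb{N}$ with $\sum_{k=1}^\infty p_{i_0k}=+\infty$. Let $$\eta=\sum_{k=1}^\infty\frac{(-1)^{k-1}}{\eta_1(\eta_1+\eta_2)\cdots(\eta_1+\eta_2+\dots+\eta_k)}.$$ Then: (1) $\eta$ has a purely discrete distribution if and only if $\prod_{k=1}^\infty\max_i p_{ik}>0$; (2) in all other cases $\eta$ has a singularly continuous distribution. *)

theory Defs
  imports "HOL-Probability.Probability"
begin

definition purely_discrete_distr :: "real measure \<Rightarrow> bool" where
  "purely_discrete_distr N \<longleftrightarrow> (\<exists>S. countable S \<and> (AE x in N. x \<in> S))"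

definition singular_continuous_distr :: "real measure \<Rightarrow> bool" where
  "singular_continuous_distr N \<longleftrightarrow>
     (\<forall>x. emeasure N {x} = 0) \<and>
     (\<exists>S \<in> sets borel. emeasure lborel S = 0 \<and> (AE x in N. x \<in> S))"

end

theory Submission
  imports Defs "HOL-Real_Asymp.Real_Asymp"
begin

text \<open>With \<open>Q k = X 0 + ... + X k\<close>, the value \<open>eta\<close> is the Pierce series of the strictly increasing
  sequence \<open>Q\<close>, and it determines \<open>Q\<close>: it lies in \<open>[1/(Q 0 + 1), 1/Q 0)\<close>, which fixes \<open>Q 0\<close>, and
  \<open>1 - Q 0 * eta\<close> is the Pierce series of the shifted sequence. So every atom of \<open>eta\<close> has probability
  at most \<open>\<Prod>k<n. max\<^sub>i p i k\<close> for each \<open>n\<close>, and there are no atoms when this product tends to \<open>0\<close>.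
  If it tends to a positive limit, then \<open>\<Sum>k. 1 - max\<^sub>i p i k\<close> converges, and by the Borel-Cantelli
  lemma almost surely every digit \<open>X k\<close> with large \<open>k\<close> equals a fixed nearly most likely value, so
  \<open>eta\<close> takes only countably many values. Otherwise the second Borel-Cantelli lemma makes the digit
  \<open>i0\<close> occur infinitely often almost surely, and the reals whose Pierce sequence has the gap
  \<open>Q (n + 1) - Q n = i0\<close> for infinitely many \<open>n\<close> form a Lebesgue null set, because the gap at
  position \<open>n\<close> occurs on a set of measure at most \<open>2 ^ -(n + 1)\<close>.\<close>

section \<open>Pierce series\<close>

definition pierce :: "(nat \<Rightarrow> nat) \<Rightarrow> real" where
  "pierce q = (\<Sum>k. (-1) ^ k / (\<Prod>j\<le>k. real (q j)))"

lemma strict_mono_shift: "strict_mono q \<Longrightarrow> strict_mono (\<lambda>k. q (Suc k))"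
  by (simp add: strict_mono_Suc_iff)

lemma strict_mono_index_less:
  fixes q :: "nat \<Rightarrow> nat"
  assumes "strict_mono q" "0 < q 0"
  shows "k < q k"
proof (induction k)
  case (Suc k)
  then show ?case using strict_monoD[OF assms(1), of k "Suc k"] by simp
qed (use assms in simp)

lemma pierce_denominator_ge:
  fixes q :: "nat \<Rightarrow> nat"
  assumes "strict_mono q" "0 < q 0"
  shows "real k + 1 \<le> (\<Prod>j\<le>k. real (q j))"
proof (induction k)
  case (Suc k)
  have "1 * (real (Suc k) + 1) \<le> (\<Prod>j\<le>k. real (q j)) * real (q (Suc k))"
    using Suc strict_mono_index_less[OF assms, of "Suc k"] by (intro mult_mono) auto
  then show ?case by simp
qed (use assms in simp)

lemma pierce_Leibniz:
  assumes "strict_mono q" "0 < q 0"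
  shows "summable (\<lambda>k. (-1) ^ k / (\<Prod>j\<le>k. real (q j)))"
    and "1 / real (q 0) - 1 / (real (q 0) * real (q 1)) \<le> pierce q"
    and "pierce q \<le> 1 / real (q 0)"
proof -
  define a where "a k = 1 / (\<Prod>j\<le>k. real (q j))" for k
  have denom_ge: "real k + 1 \<le> (\<Prod>j\<le>k. real (q j))" for k
    by (rule pierce_denominator_ge[OF assms])
  have a_nonneg: "0 \<le> a k" for k
    using denom_ge[of k] by (simp add: a_def)
  have a_le: "a k \<le> 1 / (real k + 1)" for k
    unfolding a_def using denom_ge[of k] by (intro divide_left_mono) auto
  have inverse_lim: "(\<lambda>k. 1 / (real k + 1)) \<longlonglongrightarrow> 0" by real_asymp
  have a_lim: "a \<longlonglongrightarrow> 0"
    by (intro tendsto_sandwich[OF _ _ tendsto_const inverse_lim] always_eventually allI a_nonneg a_le)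
  have a_dec: "a (Suc k) \<le> a k" for k
  proof -
    have "(\<Prod>j\<le>k. real (q j)) * 1 \<le> (\<Prod>j\<le>k. real (q j)) * real (q (Suc k))"
      using denom_ge[of k] strict_mono_index_less[OF assms, of "Suc k"]
      by (intro mult_left_mono) auto
    then show ?thesis
      unfolding a_def using denom_ge[of k] by (intro divide_left_mono) auto
  qed
  note Leibniz = summable_Leibniz'[OF a_lim a_nonneg a_dec]
  have terms: "(\<lambda>k. (-1) ^ k / (\<Prod>j\<le>k. real (q j))) = (\<lambda>k. (-1) ^ k * a k)"
    by (simp add: a_def)
  show "summable (\<lambda>k. (-1) ^ k / (\<Prod>j\<le>k. real (q j)))"
    unfolding terms by (rule Leibniz(1))
  have "(\<Sum>k<2 * 1. (-1) ^ k * a k) \<le> pierce q"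
    using Leibniz(2)[of 1] by (simp add: pierce_def terms)
  then show "1 / real (q 0) - 1 / (real (q 0) * real (q 1)) \<le> pierce q"
    by (simp add: a_def numeral_2_eq_2)
  have "pierce q \<le> (\<Sum>k<2 * 0 + 1. (-1) ^ k * a k)"
    using Leibniz(4)[of 0] by (simp add: pierce_def terms)
  then show "pierce q \<le> 1 / real (q 0)"
    by (simp add: a_def)
qed

lemma pierce_pos:
  assumes "strict_mono q" "0 < q 0"
  shows "0 < pierce q"
proof -
  have "1 \<le> real (q 0)" "real (q 0) < real (q 1)"
    using assms strict_monoD[OF assms(1), of 0 1] by auto
  then have "1 / (real (q 0) * real (q 1)) < 1 / real (q 0)"
    by (auto simp: field_simps)
  then show ?thesis using pierce_Leibniz(2)[OF assms] by linarith
qed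

lemma pierce_shift:
  assumes "strict_mono q" "0 < q 0"
  shows "pierce q = (1 - pierce (\<lambda>k. q (Suc k))) / real (q 0)"
proof -
  let ?f = "\<lambda>k. (-1) ^ k / (\<Prod>j\<le>k. real (q j))"
  let ?g = "\<lambda>k. (-1) ^ k / (\<Prod>j\<le>k. real (q (Suc j)))"
  have "0 < q 1" using strict_monoD[OF assms(1), of 0 1] by simp
  then have "summable ?g"
    using pierce_Leibniz(1)[OF strict_mono_shift[OF assms(1)]] by simp
  then have "(\<Sum>k. ?f (Suc k)) = (\<Sum>k. - ?g k / real (q 0))"
    by (intro arg_cong[where f = suminf] ext) (simp add: prod.atMost_Suc_shift del: prod.atMost_Suc)
  also have "\<dots> = - pierce (\<lambda>k. q (Suc k)) / real (q 0)"
    using sums_divide[OF sums_minus[OF summable_sums[OF \<open>summable ?g\<close>]], of "real (q 0)"]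
    by (simp add: pierce_def sums_iff)
  finally have "(\<Sum>k. ?f (Suc k)) = - pierce (\<lambda>k. q (Suc k)) / real (q 0)" .
  moreover have "(\<Sum>k. ?f (Suc k)) = pierce q - 1 / real (q 0)"
    using suminf_split_head[OF pierce_Leibniz(1)[OF assms]] by (simp add: pierce_def)
  ultimately show ?thesis by (simp add: diff_divide_distrib)
qed

lemma pierce_bounds:
  assumes "strict_mono q" "0 < q 0"
  shows "1 / (real (q 0) + 1) \<le> pierce q" "pierce q < 1 / real (q 0)"
proof -
  have shift: "strict_mono (\<lambda>k. q (Suc k))" "0 < q (Suc 0)"
    using strict_mono_shift[OF assms(1)] strict_monoD[OF assms(1), of 0 1] by auto
  have q0: "1 \<le> real (q 0)" and q1: "real (q 0) + 1 \<le> real (q 1)"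
    using assms strict_monoD[OF assms(1), of 0 1] by auto
  have "pierce (\<lambda>k. q (Suc k)) \<le> 1 / real (q 1)"
    using pierce_Leibniz(3)[OF shift] by simp
  also have "\<dots> \<le> 1 / (real (q 0) + 1)"
    using q0 q1 by (intro divide_left_mono) auto
  finally have "pierce (\<lambda>k. q (Suc k)) * (real (q 0) + 1) \<le> 1"
    by (simp add: pos_le_divide_eq)
  then show "1 / (real (q 0) + 1) \<le> pierce q"
    unfolding pierce_shift[OF assms] using q0 by (simp add: divide_simps algebra_simps)
  show "pierce q < 1 / real (q 0)"
    unfolding pierce_shift[OF assms] using pierce_pos[OF shift] q0
    by (intro divide_strict_right_mono) auto
qed

lemma pierce_first_digit:
  assumes "strict_mono q" "0 < q 0" "strict_mono q'" "0 < q' 0" "pierce q = pierce q'"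
  shows "q 0 = q' 0"
proof -
  have less: "pierce b < pierce a"
    if "strict_mono a" "0 < a 0" "strict_mono b" "0 < b 0" "a 0 < b 0" for a b :: "nat \<Rightarrow> nat"
  proof -
    have "pierce b < 1 / real (b 0)" by (rule pierce_bounds(2)[OF that(3,4)])
    also have "\<dots> \<le> 1 / (real (a 0) + 1)"
      using that(2,5) by (intro divide_left_mono) auto
    also have "\<dots> \<le> pierce a" by (rule pierce_bounds(1)[OF that(1,2)])
    finally show ?thesis .
  qed
  show ?thesis
    using less[OF assms(1-4)] less[OF assms(3,4,1,2)] assms(5) by (metis less_irrefl linorder_cases)
qed

lemma pierce_inject:
  assumes "strict_mono q" "0 < q 0" "strict_mono q'" "0 < q' 0" "pierce q = pierce q'"
  shows "q = q'"
proof
  fix n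
  show "q n = q' n"
    using assms
  proof (induction n arbitrary: q q')
    case 0
    then show ?case by (rule pierce_first_digit)
  next
    case (Suc n)
    have first: "q 0 = q' 0" by (rule pierce_first_digit[OF Suc.prems])
    then have "pierce (\<lambda>k. q (Suc k)) = pierce (\<lambda>k. q' (Suc k))"
      using pierce_shift[OF Suc.prems(1,2)] pierce_shift[OF Suc.prems(3,4)] Suc.prems
      by (simp add: divide_cancel_right)
    moreover have "0 < q (Suc 0)" "0 < q' (Suc 0)"
      using strict_monoD[OF Suc.prems(1), of 0 1] strict_monoD[OF Suc.prems(3), of 0 1] by auto
    ultimately show ?case
      using Suc.IH[OF strict_mono_shift[OF Suc.prems(1)] _ strict_mono_shift[OF Suc.prems(3)]] by simp
  qed
qed

section \<open>Reals with a given gap in their Pierce expansion\<close>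

definition shift_preimage :: "nat \<Rightarrow> real set \<Rightarrow> real set" where
  "shift_preimage r A = (\<lambda>x. 1 - real r * x) -` A"

lemma pierce_in_shift_preimage:
  assumes "strict_mono q" "0 < q 0"
  shows "pierce q \<in> shift_preimage (q 0) A \<longleftrightarrow> pierce (\<lambda>k. q (Suc k)) \<in> A"
  using pierce_shift[OF assms] assms(2) by (simp add: shift_preimage_def)

lemma sets_shift_preimage [measurable]:
  "A \<in> sets borel \<Longrightarrow> shift_preimage r A \<in> sets borel"
  using measurable_sets[of "\<lambda>x::real. 1 - real r * x" borel borel A]
  by (simp add: shift_preimage_def)

lemma emeasure_shift_preimage:
  assumes A: "A \<in> sets borel" and r: "0 < r"
  shows "emeasure lborel A = ennreal (real r) * emeasure lborel (shift_preimage r A)"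
proof -
  have "- real r \<noteq> 0" using r by simp
  from lborel_real_affine[OF this, of 1]
  have "emeasure lborel A
      = emeasure (density (distr lborel borel (\<lambda>x. 1 + (- real r) * x)) (\<lambda>_. ennreal \<bar>- real r\<bar>)) A"
    by (rule arg_cong)
  also have "\<dots> = ennreal (real r) * emeasure lborel ((\<lambda>x. 1 + (- real r) * x) -` A)"
    using A by (simp add: emeasure_density_const emeasure_distr)
  finally show ?thesis by (simp add: shift_preimage_def)
qed

lemma emeasure_shift_preimage_le:
  assumes A: "A \<in> sets borel" and r: "0 < r"
    and le: "emeasure lborel A \<le> ennreal (c / (real r + 1)^2)"
  shows "emeasure lborel (shift_preimage r A) \<le> ennreal (c / (real r * (real r + 1)^2))"
proof -
  have "emeasure lborel (shift_preimage r A)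
      = ennreal (1 / real r) * (ennreal (real r) * emeasure lborel (shift_preimage r A))"
    using r by (simp add: mult.assoc[symmetric] flip: ennreal_mult)
  also have "\<dots> \<le> ennreal (1 / real r) * ennreal (c / (real r + 1)^2)"
    using le by (intro mult_left_mono) (simp_all add: emeasure_shift_preimage[OF A r])
  also have "\<dots> = ennreal (c / (real r * (real r + 1)^2))"
    using r by (cases "0 \<le> c") (simp_all add: ennreal_mult'[symmetric] ennreal_neg)
  finally show ?thesis .
qed

lemma cubic_le_telescoping:
  fixes r c :: real
  assumes "1 \<le> r" "0 \<le> c"
  shows "c / (r * (r + 1)^2) \<le> c / 2 / r^2 - c / 2 / (r + 1)^2"
proof -
  have "r \<noteq> 0" "r + 1 \<noteq> 0" using assms(1) by auto
  then have "c / 2 / r^2 - c / 2 / (r + 1)^2 = c * (2 * r + 1) / (2 * r^2 * (r + 1)^2)"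
    and "c / (r * (r + 1)^2) = c * (2 * r) / (2 * r^2 * (r + 1)^2)"
    by (simp_all add: divide_simps) (simp_all add: algebra_simps power2_eq_square)
  moreover have "c * (2 * r) / (2 * r^2 * (r + 1)^2) \<le> c * (2 * r + 1) / (2 * r^2 * (r + 1)^2)"
    using assms by (intro divide_right_mono mult_left_mono) auto
  ultimately show ?thesis by argo
qed

lemma suminf_cubic_tail_le:
  assumes c: "0 \<le> c"
  shows "(\<Sum>k. ennreal (c / (real (k + m + 1) * (real (k + m + 1) + 1)^2)))
           \<le> ennreal (c / (2 * (real m + 1)^2))"
proof -
  define h where "h n = c / 2 / (real (n + m + 1))^2" for n
  have "h \<longlonglongrightarrow> 0" unfolding h_def by real_asymp
  then have telescope: "(\<lambda>n. h n - h (Suc n)) sums h 0"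
    using telescope_sums'[of h 0] by simp
  have term_le: "c / (real (k + m + 1) * (real (k + m + 1) + 1)^2) \<le> h k - h (Suc k)" for k
    using cubic_le_telescoping[of "real (k + m + 1)" c] c by (simp add: h_def add_ac)
  have telescope_nonneg: "0 \<le> h k - h (Suc k)" for k
    using c by (intro order_trans[OF _ term_le]) simp
  have "(\<Sum>k. ennreal (c / (real (k + m + 1) * (real (k + m + 1) + 1)^2)))
      \<le> (\<Sum>k. ennreal (h k - h (Suc k)))"
    by (intro suminf_le ennreal_leI term_le) simp_all
  also have "\<dots> = ennreal (\<Sum>k. h k - h (Suc k))"
    using telescope telescope_nonneg by (intro suminf_ennreal2) (auto simp: sums_iff)
  also have "(\<Sum>k. h k - h (Suc k)) = c / (2 * (real m + 1)^2)"
    using telescope by (simp add: sums_iff h_def add_ac)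
  finally show ?thesis .
qed

lemma emeasure_shifted_Union_le:
  assumes "\<And>k. A k \<in> sets borel" "0 \<le> c"
    and "\<And>k. emeasure lborel (A k) \<le> ennreal (c / (real (k + m + 1) * (real (k + m + 1) + 1)^2))"
  shows "emeasure lborel (\<Union>k. A k) \<le> ennreal (c / (2 * (real m + 1)^2))"
proof -
  have "emeasure lborel (\<Union>k. A k) \<le> (\<Sum>k. emeasure lborel (A k))"
    using assms(1) by (intro emeasure_subadditive_countably) auto
  also have "\<dots> \<le> (\<Sum>k. ennreal (c / (real (k + m + 1) * (real (k + m + 1) + 1)^2)))"
    using assms(3) by (intro suminf_le) simp_all
  also have "\<dots> \<le> ennreal (c / (2 * (real m + 1)^2))"
    by (rule suminf_cubic_tail_le[OF assms(2)])
  finally show ?thesis .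
qed

lemma inverse_diff_le_square:
  fixes x r :: real
  assumes "r + 1 \<le> x" "0 \<le> r"
  shows "1 / x - 1 / (x + 1) \<le> 1 / (r + 1)^2"
proof -
  have "1 / x - 1 / (x + 1) = 1 / (x * (x + 1))"
    using assms by (simp add: field_simps)
  also have "\<dots> \<le> 1 / (r + 1)^2"
    using assms unfolding power2_eq_square by (intro divide_left_mono mult_mono) auto
  finally show ?thesis .
qed

text \<open>A Borel superset of \<open>{pierce q | q. m < q 0 \<and> q (n + 1) = q n + d}\<close>: each union peels off
  the first digit \<open>q 0 = k + m + 1\<close> with \<open>shift_preimage\<close>, and after \<open>n + 1\<close> steps the remaining
  value lies in the interval that \<open>pierce_bounds\<close> assigns to the first digit \<open>q n + d\<close>.\<close>

fun pierce_gap_set :: "nat \<Rightarrow> nat \<Rightarrow> nat \<Rightarrow> real set" where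
  "pierce_gap_set d 0 m =
     (\<Union>k. shift_preimage (k + m + 1) {1 / (real (k + m + 1 + d) + 1) .. 1 / real (k + m + 1 + d)})"
| "pierce_gap_set d (Suc n) m =
     (\<Union>k. shift_preimage (k + m + 1) (pierce_gap_set d n (k + m + 1)))"

lemma sets_pierce_gap_set [measurable]: "pierce_gap_set d n m \<in> sets borel"
  by (induction n arbitrary: m) auto

lemma pierce_in_gap_set:
  assumes "strict_mono q" "m < q 0" "q (Suc n) = q n + d"
  shows "pierce q \<in> pierce_gap_set d n m"
  using assms
proof (induction n arbitrary: q m)
  case 0
  define k where "k = q 0 - m - 1"
  have first: "q 0 = k + m + 1" using 0(2) by (simp add: k_def)
  have shift: "strict_mono (\<lambda>k. q (Suc k))" "0 < q (Suc 0)"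
    using strict_mono_shift[OF 0(1)] 0(2) strict_monoD[OF 0(1), of 0 1] by auto
  have "pierce (\<lambda>k. q (Suc k)) \<in> {1 / (real (k + m + 1 + d) + 1) .. 1 / real (k + m + 1 + d)}"
    using pierce_bounds[OF shift] 0(3) first by auto
  then have "pierce q \<in> shift_preimage (k + m + 1) {1 / (real (k + m + 1 + d) + 1) .. 1 / real (k + m + 1 + d)}"
    using pierce_in_shift_preimage[OF 0(1)] 0(2) first by (metis gr_zeroI not_less0)
  then show ?case by (simp only: pierce_gap_set.simps) (rule UN_I[OF UNIV_I])
next
  case (Suc n)
  define k where "k = q 0 - m - 1"
  have first: "q 0 = k + m + 1" using Suc.prems(2) by (simp add: k_def)
  have "strict_mono (\<lambda>k. q (Suc k))" "q 0 < q (Suc 0)"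
    using strict_mono_shift[OF Suc.prems(1)] strict_monoD[OF Suc.prems(1), of 0 1] by auto
  then have "pierce (\<lambda>k. q (Suc k)) \<in> pierce_gap_set d n (k + m + 1)"
    using Suc.IH Suc.prems(3) first by simp
  then have "pierce q \<in> shift_preimage (k + m + 1) (pierce_gap_set d n (k + m + 1))"
    using pierce_in_shift_preimage[OF Suc.prems(1)] Suc.prems(2) first by (metis gr_zeroI not_less0)
  then show ?case by (simp only: pierce_gap_set.simps) (rule UN_I[OF UNIV_I])
qed

lemma emeasure_pierce_gap_set_le:
  assumes "1 \<le> d"
  shows "emeasure lborel (pierce_gap_set d n m) \<le> ennreal ((1/2)^n / (2 * (real m + 1)^2))"
proof (induction n arbitrary: m)
  case 0
  have "emeasure lborel (shift_preimage (k + m + 1) {1 / (real (k + m + 1 + d) + 1) .. 1 / real (k + m + 1 + d)})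
          \<le> ennreal (1 / (real (k + m + 1) * (real (k + m + 1) + 1)^2))" for k
  proof (rule emeasure_shift_preimage_le)
    have "1 / (real (k + m + 1 + d) + 1) \<le> 1 / real (k + m + 1 + d)"
      by (intro divide_left_mono) auto
    then have "emeasure lborel {1 / (real (k + m + 1 + d) + 1) .. 1 / real (k + m + 1 + d)}
        = ennreal (1 / real (k + m + 1 + d) - 1 / (real (k + m + 1 + d) + 1))"
      by (rule emeasure_lborel_Icc)
    also have "\<dots> \<le> ennreal (1 / (real (k + m + 1) + 1)^2)"
      using assms by (intro ennreal_leI inverse_diff_le_square) auto
    finally show "emeasure lborel {1 / (real (k + m + 1 + d) + 1) .. 1 / real (k + m + 1 + d)}
        \<le> ennreal (1 / (real (k + m + 1) + 1)^2)" .
  qed auto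
  then have "emeasure lborel (pierce_gap_set d 0 m) \<le> ennreal (1 / (2 * (real m + 1)^2))"
    by (simp only: pierce_gap_set.simps) (intro emeasure_shifted_Union_le; simp)
  then show ?case by simp
next
  case (Suc n)
  have "emeasure lborel (shift_preimage (k + m + 1) (pierce_gap_set d n (k + m + 1)))
          \<le> ennreal ((1/2)^n / 2 / (real (k + m + 1) * (real (k + m + 1) + 1)^2))" for k
    using Suc.IH[of "k + m + 1"] by (intro emeasure_shift_preimage_le) (simp_all add: mult.commute)
  then have "emeasure lborel (pierce_gap_set d (Suc n) m) \<le> ennreal ((1/2)^n / 2 / (2 * (real m + 1)^2))"
    by (simp only: pierce_gap_set.simps) (intro emeasure_shifted_Union_le; simp)
  then show ?case by (simp add: mult.commute)
qed

lemma limsup_pierce_gap_set_null: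
  assumes "1 \<le> d"
  shows "limsup (\<lambda>n. pierce_gap_set d n 0) \<in> null_sets lborel"
proof (rule borel_cantelli_limsup1)
  show "emeasure lborel (pierce_gap_set d n 0) < \<infinity>" for n
    using emeasure_pierce_gap_set_le[OF assms, of n 0] by (simp add: le_less_trans)
  have bound: "measure lborel (pierce_gap_set d n 0) \<le> (1/2)^n / 2" for n
    using enn2real_mono[OF emeasure_pierce_gap_set_le[OF assms, of n 0]] by (simp add: measure_def)
  have "summable (\<lambda>n. (1/2::real)^n / 2)"
    by (intro summable_divide summable_geometric) simp
  then show "summable (\<lambda>n. measure lborel (pierce_gap_set d n 0))"
    by (rule summable_comparison_test'[where N = 0]) (use bound in simp)
qed simp

lemma pierce_in_limsup_gap_set:
  assumes "strict_mono q" "0 < q 0" "\<exists>\<^sub>F n in sequentially. q (Suc n) = q n + d"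
  shows "pierce q \<in> limsup (\<lambda>n. pierce_gap_set d n 0)"
  unfolding mem_limsup_iff using assms(3) by (rule frequently_elim1) (rule pierce_in_gap_set[OF assms(1,2)])

section \<open>Independent digits\<close>

lemma strict_mono_partial_sums:
  fixes f :: "nat \<Rightarrow> nat"
  assumes "\<And>k. 1 \<le> f k"
  shows "strict_mono (\<lambda>k. \<Sum>i\<le>k. f i)" "0 < (\<Sum>i\<le>0. f i)"
  using assms[of 0] assms by (auto simp: strict_mono_Suc_iff Suc_le_eq)

lemma partial_sums_inject:
  fixes a b :: "nat \<Rightarrow> 'a :: cancel_comm_monoid_add"
  assumes "\<And>k. (\<Sum>i\<le>k. a i) = (\<Sum>i\<le>k. b i)"
  shows "a = b"
proof
  fix k
  show "a k = b k"
  proof (cases k)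
    case (Suc j)
    then show ?thesis using assms[of j] assms[of "Suc j"] by simp
  qed (use assms[of 0] in simp)
qed

lemma pierce_partial_sums_inject:
  fixes a b :: "nat \<Rightarrow> nat"
  assumes "\<And>k. 1 \<le> a k" "\<And>k. 1 \<le> b k"
    and "pierce (\<lambda>k. \<Sum>i\<le>k. a i) = pierce (\<lambda>k. \<Sum>i\<le>k. b i)"
  shows "a = b"
  using pierce_inject[OF strict_mono_partial_sums[OF assms(1)] strict_mono_partial_sums[OF assms(2)] assms(3)]
  by (intro partial_sums_inject) (rule fun_cong)

lemma borel_measurable_pierce_partial_sums:
  assumes [measurable]: "\<And>k. X k \<in> measurable M (count_space UNIV)"
    and digits: "\<And>k \<omega>. \<omega> \<in> space M \<Longrightarrow> 1 \<le> X k \<omega>"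
  shows "(\<lambda>\<omega>. pierce (\<lambda>k. \<Sum>i\<le>k. X i \<omega>)) \<in> borel_measurable M"
proof (rule borel_measurable_LIMSEQ_real)
  fix \<omega> assume "\<omega> \<in> space M"
  then have "summable (\<lambda>k. (-1) ^ k / (\<Prod>j\<le>k. real (\<Sum>i\<le>j. X i \<omega>)))"
    using digits by (intro pierce_Leibniz(1) strict_mono_partial_sums) auto
  then show "(\<lambda>n. \<Sum>k<n. (-1) ^ k / (\<Prod>j\<le>k. real (\<Sum>i\<le>j. X i \<omega>))) \<longlonglongrightarrow> pierce (\<lambda>k. \<Sum>i\<le>k. X i \<omega>)"
    unfolding pierce_def by (rule summable_LIMSEQ)
qed measurable

lemma prod_one_minus_le_exp_sum:
  fixes p :: "'a \<Rightarrow> real"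
  assumes "\<And>k. k \<in> J \<Longrightarrow> p k \<le> 1"
  shows "(\<Prod>k\<in>J. 1 - p k) \<le> exp (- (\<Sum>k\<in>J. p k))"
proof (cases "finite J")
  case True
  have "(\<Prod>k\<in>J. 1 - p k) \<le> (\<Prod>k\<in>J. exp (- p k))"
    using assms by (intro prod_mono) (auto simp: exp_ge_add_one_self[of "- p _", simplified])
  also have "\<dots> = exp (- (\<Sum>k\<in>J. p k))"
    using exp_sum[OF True, of "\<lambda>k. - p k"] by (simp add: sum_negf)
  finally show ?thesis .
qed simp

lemma not_summable_tail_unbounded:
  fixes f :: "nat \<Rightarrow> real"
  assumes "\<And>k. 0 \<le> f k" "\<not> summable f"
  shows "\<exists>N. B \<le> (\<Sum>k\<in>{K..<N}. f k)"
proof (rule ccontr)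
  assume "\<not> ?thesis"
  then have tail: "(\<Sum>k\<in>{K..<N}. f k) < B" for N
    by (simp add: not_le)
  have "(\<Sum>k<N. f k) \<le> (\<Sum>k<K. f k) + B" for N
  proof (cases "K \<le> N")
    case True
    then have "(\<Sum>k<N. f k) = (\<Sum>k<K. f k) + (\<Sum>k\<in>{K..<N}. f k)"
      by (simp add: lessThan_atLeast0 sum.atLeastLessThan_concat)
    then show ?thesis using tail[of N] by simp
  next
    case False
    then have "(\<Sum>k<N. f k) \<le> (\<Sum>k<K. f k)"
      using assms(1) by (intro sum_mono2) auto
    then show ?thesis using tail[of K] by simp
  qed
  then have "summable f" by (intro summableI_nonneg_bounded[OF assms(1)])
  with assms(2) show False ..
qed

lemma (in prob_space) indep_events_compl:
  assumes "indep_events A I"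
  shows "indep_events (\<lambda>i. space M - A i) I"
proof -
  have "indep_sets (\<lambda>i. sigma_sets (space M) {A i}) I"
    using assms unfolding indep_events_def_alt by (intro indep_sets_sigma) (auto simp: Int_stable_def)
  then show ?thesis
    unfolding indep_events_def_alt
    by (rule indep_sets_mono_sets) (auto intro: sigma_sets.Compl sigma_sets.Basic)
qed

lemma (in prob_space) borel_cantelli_AE2:
  assumes indep: "indep_events A UNIV" and diverges: "\<not> summable (\<lambda>n. prob (A n))"
  shows "AE x in M. \<exists>\<^sub>F n in sequentially. x \<in> A n"
proof -
  have events: "A n \<in> events" for n
    using indep by (auto simp: indep_events_def)
  have indep_compl: "indep_events (\<lambda>n. space M - A n) UNIV"
    by (rule indep_events_compl[OF indep])
  have avoid_null: "{x \<in> space M. \<forall>n\<ge>K. x \<notin> A n} \<in> null_sets M" for K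
  proof -
    let ?F = "{x \<in> space M. \<forall>n\<ge>K. x \<notin> A n}"
    have F_eq: "?F = space M \<inter> (\<Inter>n\<in>{K..}. space M - A n)" by auto
    have F_event: "?F \<in> events"
      unfolding F_eq using events by (intro sets.Int sets.countable_INT') auto
    have bound: "prob ?F \<le> exp (- real j)" for j
    proof -
      obtain N where N: "real j + 1 \<le> (\<Sum>k\<in>{K..<N}. prob (A k))"
        using not_summable_tail_unbounded[OF measure_nonneg diverges] by blast
      then have "{K..<N} \<noteq> {}" by (cases "K < N") auto
      then have "prob ?F \<le> prob (\<Inter>k\<in>{K..<N}. space M - A k)"
        using events by (intro finite_measure_mono) auto
      also have "\<dots> = (\<Prod>k\<in>{K..<N}. 1 - prob (A k))"
        using indep_compl \<open>{K..<N} \<noteq> {}\<close> events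
        by (simp add: indep_events_def prob_compl)
      also have "\<dots> \<le> exp (- (\<Sum>k\<in>{K..<N}. prob (A k)))"
        by (intro prod_one_minus_le_exp_sum) simp
      also have "\<dots> \<le> exp (- real j)"
        using N by simp
      finally show ?thesis .
    qed
    have "(\<lambda>j. exp (- real j)) \<longlonglongrightarrow> 0" by real_asymp
    then have "prob ?F \<le> 0"
      by (rule LIMSEQ_le_const) (use bound in auto)
    then have "emeasure M ?F = 0"
      using measure_nonneg[of M ?F] by (simp add: emeasure_eq_measure)
    then show ?thesis using F_event by (rule null_setsI)
  qed
  have "AE x in M. \<exists>n\<ge>K. x \<in> A n" for K
    by (rule AE_I'[OF avoid_null[of K]]) auto
  then have "AE x in M. \<forall>K. \<exists>n\<ge>K. x \<in> A n"
    by (simp add: AE_all_countable)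
  then show ?thesis by (simp add: frequently_sequentially)
qed

section \<open>The distribution of a random Pierce series\<close>

lemma countable_in_sets_borel:
  fixes S :: "'a :: t1_space set"
  shows "countable S \<Longrightarrow> S \<in> sets borel"
  by (rule sets.countable) auto

lemma (in prob_space) bdd_above_range_prob: "bdd_above (range (\<lambda>i. prob (A i)))"
  by (auto intro: bdd_aboveI[where M = 1])

lemma (in prob_space) prob_le_SUP_prob: "prob (A i) \<le> (SUP j. prob (A j))"
  by (rule cSUP_upper[OF UNIV_I bdd_above_range_prob])

lemma (in prob_space) SUP_prob_nonneg: "0 \<le> (SUP j. prob (A j))"
  using prob_le_SUP_prob[of A undefined] measure_nonneg[of M "A undefined"] by linarith

lemma (in prob_space) SUP_prob_le_1: "(SUP j. prob (A j)) \<le> 1"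
  by (rule cSUP_least) auto

lemma prod_unit_interval_LIMSEQ:
  fixes s :: "nat \<Rightarrow> real"
  assumes "\<And>k. 0 \<le> s k" "\<And>k. s k \<le> 1"
  shows "\<exists>L\<ge>0. (\<lambda>n. \<Prod>k<n. s k) \<longlonglongrightarrow> L"
proof -
  have "decseq (\<lambda>n. \<Prod>k<n. s k)"
    using assms by (intro decseq_SucI) (simp add: mult_left_le prod_nonneg)
  moreover have "0 \<le> (\<Prod>k<n. s k)" for n
    using assms by (simp add: prod_nonneg)
  ultimately obtain L where "(\<lambda>n. \<Prod>k<n. s k) \<longlonglongrightarrow> L"
    using decseq_convergent[of _ 0] by blast
  moreover from this have "0 \<le> L"
    using assms by (intro LIMSEQ_le_const[OF \<open>_ \<longlonglongrightarrow> L\<close>]) (auto simp: prod_nonneg)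
  ultimately show ?thesis by blast
qed

lemma prod_LIMSEQ_pos_imp_summable:
  fixes s :: "nat \<Rightarrow> real"
  assumes "\<And>k. 0 \<le> s k" "\<And>k. s k \<le> 1"
    and lim: "(\<lambda>n. \<Prod>k<n. s k) \<longlonglongrightarrow> L" and "0 < L"
  shows "summable (\<lambda>k. 1 - s k)"
proof (rule summableI_nonneg_bounded)
  fix n
  have "decseq (\<lambda>n. \<Prod>k<n. s k)"
    using assms by (intro decseq_SucI) (simp add: mult_left_le prod_nonneg)
  then have "L \<le> (\<Prod>k<n. s k)"
    using lim by (rule decseq_ge)
  also have "\<dots> = (\<Prod>k<n. 1 - (1 - s k))" by simp
  also have "\<dots> \<le> exp (- (\<Sum>k<n. 1 - s k))"
    using assms(1) by (intro prod_one_minus_le_exp_sum) simp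
  finally have "ln L \<le> - (\<Sum>k<n. 1 - s k)"
    using ln_mono \<open>0 < L\<close> by fastforce
  then show "(\<Sum>k<n. 1 - s k) \<le> - ln L" by simp
qed (use assms(2) in simp)

lemma countable_eventually_eq:
  "countable {f :: nat \<Rightarrow> 'b :: countable. \<forall>\<^sub>F k in sequentially. f k = m k}"
proof (rule countable_subset)
  show "{f. \<forall>\<^sub>F k in sequentially. f k = m k} \<subseteq> range (\<lambda>xs k. if k < length xs then xs ! k else m k)"
  proof
    fix f assume "f \<in> {f. \<forall>\<^sub>F k in sequentially. f k = m k}"
    then obtain N where "\<And>k. N \<le> k \<Longrightarrow> f k = m k"
      by (auto simp: eventually_sequentially)
    then have "f = (\<lambda>k. if k < length (map f [0..<N]) then map f [0..<N] ! k else m k)"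
      by (auto simp: fun_eq_iff)
    then show "f \<in> range (\<lambda>xs k. if k < length xs then xs ! k else m k)" by blast
  qed
qed simp

lemma (in prob_space) AE_eventually_eq_likely_values:
  fixes X :: "nat \<Rightarrow> 'a \<Rightarrow> 'b"
  assumes X [measurable]: "\<And>k. X k \<in> measurable M (count_space UNIV)"
    and summable: "summable (\<lambda>k. 1 - (SUP i. prob {\<omega> \<in> space M. X k \<omega> = i}))"
  shows "\<exists>m. AE \<omega> in M. \<forall>\<^sub>F k in sequentially. X k \<omega> = m k"
proof -
  let ?s = "\<lambda>k. SUP i. prob {\<omega> \<in> space M. X k \<omega> = i}"
  \<comment> \<open>The supremum need not be attained; a summable slack \<open>2 ^ -k\<close> suffices.\<close>
  have "\<forall>k. \<exists>i. ?s k - (1/2)^k < prob {\<omega> \<in> space M. X k \<omega> = i}"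
  proof
    fix k
    show "\<exists>i. ?s k - (1/2)^k < prob {\<omega> \<in> space M. X k \<omega> = i}"
      using less_cSUP_iff[OF UNIV_not_empty bdd_above_range_prob[of "\<lambda>i. {\<omega> \<in> space M. X k \<omega> = i}"],
                          of "?s k - (1/2)^k"]
      by simp
  qed
  from choice[OF this] obtain m where m: "\<forall>k. ?s k - (1/2)^k < prob {\<omega> \<in> space M. X k \<omega> = m k}"
    by blast
  define A where "A k = {\<omega> \<in> space M. X k \<omega> \<noteq> m k}" for k
  have A_events: "A k \<in> events" for k
    unfolding A_def by measurable
  have "prob (A k) = 1 - prob {\<omega> \<in> space M. X k \<omega> = m k}" for k
  proof -
    have "A k = space M - {\<omega> \<in> space M. X k \<omega> = m k}" by (auto simp: A_def)
    then show ?thesis using X by (simp add: prob_compl)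
  qed
  then have "prob (A k) \<le> (1 - ?s k) + (1/2)^k" for k
    using spec[OF m, of k] by simp
  then have "summable (\<lambda>k. prob (A k))"
    by (intro summable_comparison_test'[where N = 0, OF summable_add[OF summable summable_geometric]]) auto
  then have "AE \<omega> in M. \<forall>\<^sub>F k in sequentially. \<omega> \<in> space M - A k"
    using A_events by (intro borel_cantelli_AE1) (auto simp: emeasure_eq_measure)
  then have "AE \<omega> in M. \<forall>\<^sub>F k in sequentially. X k \<omega> = m k"
    by (rule AE_mp) (auto simp: A_def elim: eventually_mono)
  then show ?thesis by blast
qed

lemma (in prob_space) purely_discrete_pierce_partial_sums:
  assumes X [measurable]: "\<And>k. X k \<in> measurable M (count_space UNIV)"
    and digits: "\<And>k \<omega>. \<omega> \<in> space M \<Longrightarrow> 1 \<le> X k \<omega>"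
    and lim: "(\<lambda>n. \<Prod>k<n. (SUP i. prob {\<omega> \<in> space M. X k \<omega> = i})) \<longlonglongrightarrow> L" and "0 < L"
  shows "purely_discrete_distr (distr M borel (\<lambda>\<omega>. pierce (\<lambda>k. \<Sum>i\<le>k. X i \<omega>)))"
proof -
  have "summable (\<lambda>k. 1 - (SUP i. prob {\<omega> \<in> space M. X k \<omega> = i}))"
    using lim \<open>0 < L\<close> by (intro prod_LIMSEQ_pos_imp_summable SUP_prob_nonneg SUP_prob_le_1)
  with AE_eventually_eq_likely_values[of X, OF X]
  obtain m where m: "AE \<omega> in M. \<forall>\<^sub>F k in sequentially. X k \<omega> = m k"
    by blast
  define S where "S = (\<lambda>f. pierce (\<lambda>k. \<Sum>i\<le>k. f i)) ` {f. \<forall>\<^sub>F k in sequentially. f k = m k}"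
  have "countable S"
    unfolding S_def by (intro countable_image countable_eventually_eq)
  moreover have "AE \<omega> in M. pierce (\<lambda>k. \<Sum>i\<le>k. X i \<omega>) \<in> S"
    using m by eventually_elim (auto simp: S_def)
  moreover have "S \<in> sets borel"
    using \<open>countable S\<close> by (rule countable_in_sets_borel)
  ultimately have "AE x in distr M borel (\<lambda>\<omega>. pierce (\<lambda>k. \<Sum>i\<le>k. X i \<omega>)). x \<in> S"
    by (subst AE_distr_iff[OF borel_measurable_pierce_partial_sums[OF X digits]]) simp_all
  with \<open>countable S\<close> show ?thesis
    unfolding purely_discrete_distr_def by blast
qed

lemma (in prob_space) prob_pierce_partial_sums_eq_le:
  assumes X [measurable]: "\<And>k. X k \<in> measurable M (count_space UNIV)"
    and indep: "indep_vars (\<lambda>_. count_space UNIV) X UNIV"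
    and digits: "\<And>k \<omega>. \<omega> \<in> space M \<Longrightarrow> 1 \<le> X k \<omega>"
  shows "prob {\<omega> \<in> space M. pierce (\<lambda>k. \<Sum>i\<le>k. X i \<omega>) = x}
           \<le> (\<Prod>k<n. (SUP i. prob {\<omega> \<in> space M. X k \<omega> = i}))"
proof (cases "n = 0 \<or> {\<omega> \<in> space M. pierce (\<lambda>k. \<Sum>i\<le>k. X i \<omega>) = x} = {}")
  case False
  then obtain \<omega>\<^sub>0 where \<omega>\<^sub>0: "\<omega>\<^sub>0 \<in> space M" "pierce (\<lambda>k. \<Sum>i\<le>k. X i \<omega>\<^sub>0) = x" and "n \<noteq> 0"
    by blast
  have "{\<omega> \<in> space M. pierce (\<lambda>k. \<Sum>i\<le>k. X i \<omega>) = x} \<subseteq> (\<Inter>k<n. X k -` {X k \<omega>\<^sub>0} \<inter> space M)"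
  proof
    fix \<omega> assume \<omega>: "\<omega> \<in> {\<omega> \<in> space M. pierce (\<lambda>k. \<Sum>i\<le>k. X i \<omega>) = x}"
    then have "(\<lambda>k. X k \<omega>) = (\<lambda>k. X k \<omega>\<^sub>0)"
      using \<omega>\<^sub>0 digits by (intro pierce_partial_sums_inject) auto
    with \<omega> show "\<omega> \<in> (\<Inter>k<n. X k -` {X k \<omega>\<^sub>0} \<inter> space M)"
      by (auto dest: fun_cong)
  qed
  then have "prob {\<omega> \<in> space M. pierce (\<lambda>k. \<Sum>i\<le>k. X i \<omega>) = x} \<le> prob (\<Inter>k<n. X k -` {X k \<omega>\<^sub>0} \<inter> space M)"
    using \<open>n \<noteq> 0\<close> by (intro finite_measure_mono sets.finite_INT) auto
  also have "\<dots> = (\<Prod>k<n. prob (X k -` {X k \<omega>\<^sub>0} \<inter> space M))"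
    using \<open>n \<noteq> 0\<close> by (intro indep_varsD[OF indep]) auto
  also have "\<dots> \<le> (\<Prod>k<n. (SUP i. prob {\<omega> \<in> space M. X k \<omega> = i}))"
  proof (intro prod_mono conjI)
    fix k
    have "X k -` {X k \<omega>\<^sub>0} \<inter> space M = {\<omega> \<in> space M. X k \<omega> = X k \<omega>\<^sub>0}" by auto
    then show "prob (X k -` {X k \<omega>\<^sub>0} \<inter> space M) \<le> (SUP i. prob {\<omega> \<in> space M. X k \<omega> = i})"
      using prob_le_SUP_prob[of "\<lambda>i. {\<omega> \<in> space M. X k \<omega> = i}"] by simp
  qed simp
  finally show ?thesis .
next
  case True
  then show ?thesis
  proof
    assume empty: "{\<omega> \<in> space M. pierce (\<lambda>k. \<Sum>i\<le>k. X i \<omega>) = x} = {}"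
    show ?thesis unfolding empty by (simp add: prod_nonneg SUP_prob_nonneg)
  qed simp
qed

lemma not_purely_discrete_distr_if_no_atoms:
  assumes "prob_space N" "sets N = sets borel" "\<And>x. emeasure N {x} = 0"
  shows "\<not> purely_discrete_distr N"
proof
  assume "purely_discrete_distr N"
  then obtain S where S: "countable S" "AE x in N. x \<in> S"
    unfolding purely_discrete_distr_def by blast
  have "emeasure N S = (\<integral>\<^sup>+x. emeasure N {x} \<partial>count_space S)"
    using S(1) assms(2) by (intro emeasure_countable_singleton) auto
  then have "S \<in> null_sets N"
    using countable_in_sets_borel[OF S(1)] assms by (simp add: null_sets_def)
  with S(2) have "AE x in N. False"
    by (auto dest: AE_not_in elim: AE_mp)
  with prob_space.AE_False[OF assms(1)] show False by simp
qed

lemma (in prob_space) singular_continuous_pierce_partial_sums: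
  assumes X [measurable]: "\<And>k. X k \<in> measurable M (count_space UNIV)"
    and indep: "indep_vars (\<lambda>_. count_space UNIV) X UNIV"
    and digits: "\<And>k \<omega>. \<omega> \<in> space M \<Longrightarrow> 1 \<le> X k \<omega>"
    and lim: "(\<lambda>n. \<Prod>k<n. (SUP i. prob {\<omega> \<in> space M. X k \<omega> = i})) \<longlonglongrightarrow> 0"
    and diverges: "\<not> summable (\<lambda>k. prob {\<omega> \<in> space M. X k \<omega> = d})"
  shows "singular_continuous_distr (distr M borel (\<lambda>\<omega>. pierce (\<lambda>k. \<Sum>i\<le>k. X i \<omega>)))"
proof -
  let ?\<eta> = "\<lambda>\<omega>. pierce (\<lambda>k. \<Sum>i\<le>k. X i \<omega>)"
  have \<eta> [measurable]: "?\<eta> \<in> borel_measurable M"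
    by (rule borel_measurable_pierce_partial_sums[OF X digits])
  have "prob {\<omega> \<in> space M. ?\<eta> \<omega> = x} \<le> 0" for x
    using prob_pierce_partial_sums_eq_le[OF X indep digits] by (intro LIMSEQ_le_const[OF lim]) auto
  then have "prob {\<omega> \<in> space M. ?\<eta> \<omega> = x} = 0" for x
    by (intro antisym measure_nonneg)
  then have atoms: "emeasure (distr M borel ?\<eta>) {x} = 0" for x
    by (simp add: emeasure_distr emeasure_eq_measure vimage_def Int_def conj_commute)
  have "d \<noteq> 0"
  proof
    assume "d = 0"
    moreover have "X k \<omega> \<noteq> 0" if "\<omega> \<in> space M" for k \<omega>
      using digits[OF that, of k] by simp
    ultimately have "{\<omega> \<in> space M. X k \<omega> = d} = {}" for k
      by auto
    with diverges show False by simp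
  qed
  have "indep_events (\<lambda>k. {\<omega> \<in> space M. X k \<omega> = d}) UNIV"
    by (rule indep_eventsI_indep_vars[OF indep]) simp
  then have "AE \<omega> in M. \<exists>\<^sub>F k in sequentially. X k \<omega> = d"
    using diverges by (auto dest: borel_cantelli_AE2)
  then have "AE \<omega> in M. ?\<eta> \<omega> \<in> limsup (\<lambda>n. pierce_gap_set d n 0)"
  proof (rule AE_mp, intro AE_I2 impI)
    fix \<omega> assume "\<omega> \<in> space M" and "\<exists>\<^sub>F k in sequentially. X k \<omega> = d"
    then have "\<exists>\<^sub>F n in sequentially. X (Suc n) \<omega> = d"
      using eventually_sequentially_Suc[of "\<lambda>k. X k \<omega> \<noteq> d"] by (simp add: frequently_def)
    then have "\<exists>\<^sub>F n in sequentially. (\<Sum>i\<le>Suc n. X i \<omega>) = (\<Sum>i\<le>n. X i \<omega>) + d"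
      by simp
    with \<open>\<omega> \<in> space M\<close> show "?\<eta> \<omega> \<in> limsup (\<lambda>n. pierce_gap_set d n 0)"
      using digits by (intro pierce_in_limsup_gap_set strict_mono_partial_sums) auto
  qed
  moreover have null: "limsup (\<lambda>n. pierce_gap_set d n 0) \<in> null_sets lborel"
    using \<open>d \<noteq> 0\<close> by (intro limsup_pierce_gap_set_null) simp
  then have borel: "limsup (\<lambda>n. pierce_gap_set d n 0) \<in> sets borel"
    by (auto dest: null_setsD2)
  ultimately have "AE x in distr M borel ?\<eta>. x \<in> limsup (\<lambda>n. pierce_gap_set d n 0)"
    by (subst AE_distr_iff) simp_all
  then show ?thesis
    unfolding singular_continuous_distr_def using atoms null borel by (auto simp: null_sets_def)
qed

theorem mainTheorem11:
  fixes M :: "'a measure" and X :: "nat \<Rightarrow> 'a \<Rightarrow> nat"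
    and p :: "nat \<Rightarrow> nat \<Rightarrow> real" and eta :: "'a \<Rightarrow> real"
  assumes "prob_space M"
    and "\<And>k. X k \<in> measurable M (count_space UNIV)"
    and "prob_space.indep_vars M (\<lambda>_. count_space UNIV) X UNIV"
    and "\<And>k \<omega>. \<omega> \<in> space M \<Longrightarrow> X k \<omega> \<ge> 1"
    and "\<And>i k. p i k = measure M {\<omega> \<in> space M. X k \<omega> = i}"
    and "\<exists>i0. \<not> summable (\<lambda>k. p i0 k)"
    and "\<And>\<omega>. eta \<omega> = (\<Sum>k. (-1) ^ k / (\<Prod>j\<le>k. real (\<Sum>i\<le>j. X i \<omega>)))"
  shows "(purely_discrete_distr (distr M borel eta) \<longleftrightarrow>
            (\<exists>L>0. (\<lambda>n. \<Prod>k<n. (SUP i. p i k)) \<longlonglongrightarrow> L))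
       \<and> (\<not> (\<exists>L>0. (\<lambda>n. \<Prod>k<n. (SUP i. p i k)) \<longlonglongrightarrow> L)
            \<longrightarrow> singular_continuous_distr (distr M borel eta))"
proof -
  interpret prob_space M by fact
  have eta: "eta = (\<lambda>\<omega>. pierce (\<lambda>k. \<Sum>i\<le>k. X i \<omega>))"
    using assms(7) by (simp add: fun_eq_iff pierce_def)
  have eta_measurable: "eta \<in> borel_measurable M"
    unfolding eta using assms(2,4) by (rule borel_measurable_pierce_partial_sums)
  have p: "p = (\<lambda>i k. prob {\<omega> \<in> space M. X k \<omega> = i})"
    using assms(5) by (simp add: fun_eq_iff)
  obtain L where "0 \<le> L" and lim: "(\<lambda>n. \<Prod>k<n. (SUP i. p i k)) \<longlonglongrightarrow> L"
    using prod_unit_interval_LIMSEQ[of "\<lambda>k. SUP i. p i k"] by (auto simp: p SUP_prob_nonneg SUP_prob_le_1)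
  have limit_pos_iff: "(\<exists>L>0. (\<lambda>n. \<Prod>k<n. (SUP i. p i k)) \<longlonglongrightarrow> L) \<longleftrightarrow> 0 < L"
    using lim LIMSEQ_unique by blast
  show ?thesis
  proof (cases "0 < L")
    case True
    then show ?thesis
      using purely_discrete_pierce_partial_sums[OF assms(2,4)] lim limit_pos_iff by (simp add: eta p)
  next
    case False
    with \<open>0 \<le> L\<close> lim have lim0: "(\<lambda>n. \<Prod>k<n. (SUP i. prob {\<omega> \<in> space M. X k \<omega> = i})) \<longlonglongrightarrow> 0"
      by (simp add: p)
    obtain i0 where "\<not> summable (\<lambda>k. prob {\<omega> \<in> space M. X k \<omega> = i0})"
      using assms(6) by (auto simp: p)
    then have "singular_continuous_distr (distr M borel eta)"
      unfolding eta using assms(2-4) lim0 by (intro singular_continuous_pierce_partial_sums) auto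
    moreover from this have "\<not> purely_discrete_distr (distr M borel eta)"
      unfolding singular_continuous_distr_def
      by (intro not_purely_discrete_distr_if_no_atoms prob_space_distr eta_measurable) auto
    ultimately show ?thesis using False limit_pos_iff by blast
  qed
qed

end
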